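(* Let $d\ge 3$ and $n\ge 3$. In $(\mathbb{C}^d)^{\otimes n}$ consider the following $n(d-1)+1$ product states. For $i=1,\dots,d-1$: $$|\phi_i\rangle=|0-i\rangle_1|0\rangle_2\cdots|0\rangle_{n-1}|i\rangle_n,$$ and for $k=1,\dots,n-1$ and $i=1,\dots,d-1$: $$|\phi_{i+k(d-1)}\rangle=|i\rangle_k|0-i\rangle_{k+1}\otimes\bigotimes_{l\notin\{k,k+1\}}|0\rangle_l,$$ together with the stopper state $|\phi_{n(d-1)+1}\rangle=\bigotimes_{l=1}^n|0+1+\cdots+(d-1)\rangle_l$. These states are pairwise orthogonal, and for every party $t\in\{1,\dots,n\}$, every orthogonality-preserving local POVM element $E_t$ on party $t$ for this set is proportional to the identity. Consequently, this set cannot be perfectly distinguished by LOCC.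
   Context: $\{|i\rangle\}$ is the computational basis; $|i_1\pm i_2\pm\cdots\pm i_r\rangle$ denotes $\frac{1}{\sqrt r}(|i_1\rangle\pm|i_2\rangle\pm\cdots\pm|i_r\rangle)$; subscripts indicate the party. For a set $\{|\psi_a\rangle\}$ of pairwise orthogonal states in $\mathbb{C}^{d_1}\otimes\cdots\otimes\mathbb{C}^{d_n}$, a positive semidefinite operator $E_t$ on $\mathbb{C}^{d_t}$ (a POVM element $M_t^\dagger M_t$ of a measurement by party $t$) is called orthogonality-preserving if $\langle\psi_a|(\mathbb{I}\otimes\cdots\otimes E_t\otimes\cdots\otimes\mathbb{I})|\psi_b\rangle=0$ for all $a\neq b$; the measurement is trivial if all its POVM elements are proportional to the identity. A set of orthogonal states for which every party can only perform trivial orthogonality-preserving measurements cannot be perfectly distinguished by LOCC. *)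

theory Defs
  imports Complex_Main "HOL-Library.FuncSet"
begin

text \<open>Local vectors in C^d are functions nat => complex (components 0..d-1);
local operators on C^d are functions nat => nat => complex (entries (i,j), i,j < d).
Parties are numbered 1..n. A state in (C^d)^{\<otimes> n} is a function assigning an
amplitude to every basis multi-index j in PiE {1..n} (\<lambda>_. {..<d}).\<close>

definition ket :: "nat \<Rightarrow> nat \<Rightarrow> complex" where
  "ket i = (\<lambda>j. if j = i then 1 else 0)"

definition ket_minus :: "nat \<Rightarrow> nat \<Rightarrow> complex" where
  "ket_minus i = (\<lambda>j. (ket 0 j - ket i j) / complex_of_real (sqrt 2))"

definition ket_uniform :: "nat \<Rightarrow> nat \<Rightarrow> complex" where
  "ket_uniform d = (\<lambda>j. (\<Sum>i<d. ket i j) / complex_of_real (sqrt (real d)))"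

definition basis_idx :: "nat \<Rightarrow> nat \<Rightarrow> (nat \<Rightarrow> nat) set" where
  "basis_idx d n = PiE {1..n} (\<lambda>_. {..<d})"

definition prod_state :: "nat \<Rightarrow> (nat \<Rightarrow> nat \<Rightarrow> complex) \<Rightarrow> (nat \<Rightarrow> nat) \<Rightarrow> complex" where
  "prod_state n a = (\<lambda>j. \<Prod>l\<in>{1..n}. a l (j l))"

definition ip :: "nat \<Rightarrow> nat \<Rightarrow> ((nat \<Rightarrow> nat) \<Rightarrow> complex) \<Rightarrow> ((nat \<Rightarrow> nat) \<Rightarrow> complex) \<Rightarrow> complex" where
  "ip d n psi phi = (\<Sum>j\<in>basis_idx d n. cnj (psi j) * phi j)"

text \<open>The operator I \<otimes> ... \<otimes> E (at party t) \<otimes> ... \<otimes> I\<close>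
definition loc_op :: "nat \<Rightarrow> nat \<Rightarrow> (nat \<Rightarrow> nat \<Rightarrow> complex) \<Rightarrow> ((nat \<Rightarrow> nat) \<Rightarrow> complex) \<Rightarrow> (nat \<Rightarrow> nat) \<Rightarrow> complex" where
  "loc_op d t E psi = (\<lambda>j. \<Sum>k<d. E (j t) k * psi (j(t := k)))"

definition psd :: "nat \<Rightarrow> (nat \<Rightarrow> nat \<Rightarrow> complex) \<Rightarrow> bool" where
  "psd d E \<longleftrightarrow> (\<forall>v :: nat \<Rightarrow> complex.
      (\<Sum>i<d. \<Sum>k<d. cnj (v i) * E i k * v k) \<in> \<real> \<and>
      Re (\<Sum>i<d. \<Sum>k<d. cnj (v i) * E i k * v k) \<ge> 0)"

definition prop_identity :: "nat \<Rightarrow> (nat \<Rightarrow> nat \<Rightarrow> complex) \<Rightarrow> bool" where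
  "prop_identity d E \<longleftrightarrow> (\<exists>c. \<forall>i<d. \<forall>k<d. E i k = (if i = k then c else 0))"

text \<open>Local factor at party l of the state phi_a, a = 1..n(d-1)+1.
 a = i (1 \<le> i \<le> d-1): |0-i>_1 |0>_2 ... |0>_{n-1} |i>_n;
 a = i + k(d-1) (1 \<le> k \<le> n-1, 1 \<le> i \<le> d-1): |i>_k |0-i>_{k+1}, |0> elsewhere;
 a = n(d-1)+1: stopper state.\<close>
definition phi_loc :: "nat \<Rightarrow> nat \<Rightarrow> nat \<Rightarrow> nat \<Rightarrow> nat \<Rightarrow> complex" where
  "phi_loc d n a l =
     (if a \<le> d - 1 then
        (if l = 1 then ket_minus a else if l = n then ket a else ket 0)
      else if a \<le> n * (d - 1) then
        (let k = (a - 1) div (d - 1); i = (a - 1) mod (d - 1) + 1 in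
          if l = k then ket i else if l = k + 1 then ket_minus i else ket 0)
      else ket_uniform d)"

definition phi :: "nat \<Rightarrow> nat \<Rightarrow> nat \<Rightarrow> (nat \<Rightarrow> nat) \<Rightarrow> complex" where
  "phi d n a = prod_state n (phi_loc d n a)"

definition orth_preserving :: "nat \<Rightarrow> nat \<Rightarrow> nat \<Rightarrow> (nat \<Rightarrow> nat \<Rightarrow> complex) \<Rightarrow> bool" where
  "orth_preserving d n t E \<longleftrightarrow>
     (\<forall>a\<in>{1..n*(d-1)+1}. \<forall>b\<in>{1..n*(d-1)+1}. a \<noteq> b \<longrightarrow>
        ip d n (phi d n a) (loc_op d t E (phi d n b)) = 0)"

end

theory Submission
  imports Defs
begin

text \<open>All states are product states, so every matrix element
\<open>\<langle>\<phi>\<^sub>a|I \<otimes> E\<^sub>t \<otimes> I|\<phi>\<^sub>b\<rangle>\<close> is the local matrix element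
\<open>\<langle>a\<^sub>t|E|b\<^sub>t\<rangle>\<close> times the overlaps \<open>\<langle>a\<^sub>l|b\<^sub>l\<rangle>\<close> of the other parties.
Two distinct states always have an orthogonal pair of local factors, whence orthogonality.
If instead the local factors of \<open>\<phi>\<^sub>a\<close> and \<open>\<phi>\<^sub>b\<close> overlap at every party other
than \<open>t\<close>, orthogonality preservation forces \<open>\<langle>a\<^sub>t|E|b\<^sub>t\<rangle> = 0\<close>. Pairs carrying
\<open>|i\<rangle>, |j\<rangle>\<close> at party \<open>t\<close> kill \<open>E\<^sub>i\<^sub>j\<close> for \<open>i \<noteq> j\<close>, \<open>i \<noteq> 0\<close>
(hermiticity of \<open>E\<close> gives \<open>E\<^sub>0\<^sub>j = 0\<close>), and pairing the stopper with a state
carrying \<open>|0 - j\<rangle>\<close> at party \<open>t\<close> makes the column sums of \<open>E\<close> equal, hence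
\<open>E\<^sub>j\<^sub>j = E\<^sub>0\<^sub>0\<close>.\<close>

definition local_ip :: "nat \<Rightarrow> (nat \<Rightarrow> complex) \<Rightarrow> (nat \<Rightarrow> complex) \<Rightarrow> complex" where
  "local_ip d x y = (\<Sum>m<d. cnj (x m) * y m)"

definition mat_vec :: "nat \<Rightarrow> (nat \<Rightarrow> nat \<Rightarrow> complex) \<Rightarrow> (nat \<Rightarrow> complex) \<Rightarrow> nat \<Rightarrow> complex" where
  "mat_vec d E v = (\<lambda>p. \<Sum>q<d. E p q * v q)"

lemma ip_prod_state:
  "ip d n (prod_state n a) (prod_state n b) = (\<Prod>l\<in>{1..n}. local_ip d (a l) (b l))"
  unfolding ip_def basis_idx_def prod_state_def local_ip_def
  by (simp add: prod_sum_PiE cnj_prod prod.distrib[symmetric])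

lemma loc_op_prod_state:
  assumes t: "t \<in> {1..n}"
  shows "loc_op d t E (prod_state n b) = prod_state n (b(t := mat_vec d E (b t)))"
proof
  fix j
  have fin: "finite {1..n}" by simp
  let ?rest = "\<Prod>l\<in>{1..n}-{t}. b l (j l)"
  have "prod_state n b (j(t := k)) = b t k * ?rest" for k
    unfolding prod_state_def prod.remove[OF fin t] by (auto intro!: prod.cong)
  then have "loc_op d t E (prod_state n b) j = mat_vec d E (b t) (j t) * ?rest"
    unfolding loc_op_def mat_vec_def by (simp add: sum_distrib_right mult_ac)
  also have "\<dots> = prod_state n (b(t := mat_vec d E (b t))) j"
    unfolding prod_state_def prod.remove[OF fin t] by (auto intro!: prod.cong)
  finally show "loc_op d t E (prod_state n b) j = prod_state n (b(t := mat_vec d E (b t))) j" .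
qed

lemma ip_prod_state_loc_op:
  assumes t: "t \<in> {1..n}"
  shows "ip d n (prod_state n a) (loc_op d t E (prod_state n b)) =
    local_ip d (a t) (mat_vec d E (b t)) * (\<Prod>l\<in>{1..n}-{t}. local_ip d (a l) (b l))"
  unfolding loc_op_prod_state[OF t] ip_prod_state prod.remove[OF finite_atLeastAtMost t]
  by (auto intro!: prod.cong)

lemma local_ip_commute: "local_ip d y x = cnj (local_ip d x y)"
  unfolding local_ip_def by (simp add: mult.commute)

lemma local_ip_add_left:
  "local_ip d (\<lambda>m. x m + c * y m) z = local_ip d x z + cnj c * local_ip d y z"
  unfolding local_ip_def by (simp add: algebra_simps sum.distrib sum_distrib_left)

lemma mat_vec_add:
  "mat_vec d E (\<lambda>m. x m + c * y m) = (\<lambda>p. mat_vec d E x p + c * mat_vec d E y p)"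
  unfolding mat_vec_def by (simp add: algebra_simps sum.distrib sum_distrib_left)

lemma ket_apply: "ket i j = (if j = i then 1 else 0)"
  by (simp add: ket_def)

lemma local_ip_ket_left: "i < d \<Longrightarrow> local_ip d (ket i) w = w i"
  unfolding local_ip_def ket_def
  by (simp add: if_distrib[of cnj] if_distrib[of "\<lambda>x. x * _"] cong: if_cong)

lemma mat_vec_ket: "j < d \<Longrightarrow> mat_vec d E (ket j) = (\<lambda>p. E p j)"
  unfolding mat_vec_def ket_def by (simp add: if_distrib cong: if_cong)

lemma local_ip_mat_vec:
  "local_ip d v (mat_vec d E v) = (\<Sum>i<d. \<Sum>k<d. cnj (v i) * E i k * v k)"
  unfolding local_ip_def mat_vec_def by (simp add: sum_distrib_left mult_ac)

lemma psd_hermitian: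
  assumes "psd d E" "p < d" "q < d"
  shows "E q p = cnj (E p q)"
proof -
  have real: "Im (local_ip d v (mat_vec d E v)) = 0" for v
    using assms(1) unfolding psd_def local_ip_mat_vec by (simp add: complex_is_Real_iff)
  have diag: "Im (E p p) = 0" "Im (E q q) = 0"
    using real[of "ket p"] real[of "ket q"] assms by (simp_all add: mat_vec_ket local_ip_ket_left)
  have form: "local_ip d (\<lambda>m. ket p m + c * ket q m) (mat_vec d E (\<lambda>m. ket p m + c * ket q m))
      = E p p + c * E p q + cnj c * E q p + cnj c * c * E q q" for c
    using assms by (simp add: local_ip_add_left mat_vec_add mat_vec_ket local_ip_ket_left algebra_simps)
  have "Im (E p q) + Im (E q p) = 0"
    using real[of "\<lambda>m. ket p m + 1 * ket q m"] diag unfolding form by simp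
  moreover have "Re (E p q) - Re (E q p) = 0"
    using real[of "\<lambda>m. ket p m + \<i> * ket q m"] diag unfolding form by simp
  ultimately show ?thesis by (intro complex_eqI) simp_all
qed

lemma prop_identity_if_diagonal_col_sums_eq:
  assumes diagonal: "\<And>i j. i < d \<Longrightarrow> j < d \<Longrightarrow> i \<noteq> j \<Longrightarrow> E i j = 0"
    and col_sums: "\<And>j. j < d \<Longrightarrow> (\<Sum>p<d. E p j) = (\<Sum>p<d. E p 0)"
  shows "prop_identity d E"
proof -
  have col_sum: "(\<Sum>p<d. E p j) = E j j" if "j < d" for j
  proof -
    have "(\<Sum>p<d. E p j) = (\<Sum>p<d. if p = j then E j j else 0)"
      using diagonal that by (intro sum.cong) auto
    then show ?thesis using that by simp
  qed
  have diagonal_const: "E j j = E 0 0" if "j < d" for j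
    using col_sums[OF that] col_sum[OF that] col_sum[of 0] that by simp
  show ?thesis unfolding prop_identity_def
  proof (intro exI[of _ "E 0 0"] allI impI)
    fix i k assume "i < d" "k < d"
    then show "E i k = (if i = k then E 0 0 else 0)"
      by (cases "i = k") (simp_all add: diagonal diagonal_const[of k])
  qed
qed

lemma local_ip_ket_minus_right:
  "local_ip d x (ket_minus j) = (local_ip d x (ket 0) - local_ip d x (ket j)) / complex_of_real (sqrt 2)"
  unfolding local_ip_def ket_minus_def
  by (simp add: sum_subtractf sum_divide_distrib right_diff_distrib diff_divide_distrib)

lemma mat_vec_ket_minus:
  "j < d \<Longrightarrow> mat_vec d E (ket_minus j) = (\<lambda>p. (E p 0 - E p j) / complex_of_real (sqrt 2))"
  unfolding mat_vec_def ket_minus_def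
  by (simp add: right_diff_distrib diff_divide_distrib sum_subtractf sum_divide_distrib[symmetric]
      ket_def if_distrib[of "\<lambda>x. _ * x"] cong: if_cong)

lemma local_ip_ket_uniform_left:
  "local_ip d (ket_uniform d) w = (\<Sum>p<d. w p) / complex_of_real (sqrt (real d))"
  unfolding local_ip_def ket_uniform_def ket_def
  by (simp add: if_distrib sum_divide_distrib cong: if_cong)

lemma local_ip_ket_ket:
  "i < d \<Longrightarrow> local_ip d (ket i) (ket j) = (if i = j then 1 else 0)"
  by (simp add: local_ip_ket_left ket_apply)

lemma local_ip_ket_ket_minus:
  "i < d \<Longrightarrow> local_ip d (ket i) (ket_minus j) =
     ((if i = 0 then 1 else 0) - (if i = j then 1 else 0)) / complex_of_real (sqrt 2)"
  by (simp add: local_ip_ket_left ket_minus_def ket_apply)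

lemma local_ip_ket_minus_ket:
  "i < d \<Longrightarrow> local_ip d (ket_minus j) (ket i) =
     ((if i = 0 then 1 else 0) - (if i = j then 1 else 0)) / complex_of_real (sqrt 2)"
  by (subst local_ip_commute) (simp add: local_ip_ket_ket_minus)

lemma local_ip_ket_minus_ket_minus:
  "0 < i \<Longrightarrow> i < d \<Longrightarrow> 0 < j \<Longrightarrow> j < d \<Longrightarrow>
     local_ip d (ket_minus i) (ket_minus j) = (if i = j then 1 else 1/2)"
  by (simp add: local_ip_ket_minus_right local_ip_ket_minus_ket flip: of_real_mult)

lemma local_ip_ket_uniform_ket:
  "i < d \<Longrightarrow> local_ip d (ket_uniform d) (ket i) = 1 / complex_of_real (sqrt (real d))"
  by (simp add: local_ip_ket_uniform_left ket_def)

lemma local_ip_ket_minus_ket_uniform: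
  "j < d \<Longrightarrow> local_ip d (ket_minus j) (ket_uniform d) = 0"
  by (subst local_ip_commute)
    (simp add: local_ip_ket_uniform_left ket_minus_def ket_def sum_subtractf sum_divide_distrib[symmetric])

lemma phi_loc_first:
  "1 \<le> i \<Longrightarrow> i \<le> d - 1 \<Longrightarrow>
    phi_loc d n i = (\<lambda>l. if l = 1 then ket_minus i else if l = n then ket i else ket 0)"
  unfolding phi_loc_def by (rule ext) simp

lemma phi_loc_middle:
  assumes "1 \<le> k" "k \<le> n - 1" "1 \<le> i" "i \<le> d - 1"
  shows "phi_loc d n (i + k * (d - 1)) =
    (\<lambda>l. if l = k then ket i else if l = k + 1 then ket_minus i else ket 0)"
proof -
  obtain i' where i': "i = Suc i'" "i' < d - 1" using assms by (cases i) auto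
  then have div: "(i + k * (d - 1) - 1) div (d - 1) = k"
    and mod: "(i + k * (d - 1) - 1) mod (d - 1) + 1 = i"
    by simp_all
  have "1 * (d - 1) \<le> k * (d - 1)" "(k + 1) * (d - 1) \<le> n * (d - 1)"
    using assms by (intro mult_le_mono1; simp)+
  then have "\<not> i + k * (d - 1) \<le> d - 1" "i + k * (d - 1) \<le> n * (d - 1)"
    using assms by (simp_all add: algebra_simps)
  then show ?thesis unfolding phi_loc_def Let_def div mod by (intro ext) simp
qed

lemma phi_index_cases:
  fixes d n a :: nat
  assumes "d \<ge> 2" "a \<in> {1..n * (d - 1) + 1}"
  obtains (first) "1 \<le> a" "a \<le> d - 1"
    | (middle) k i where "1 \<le> k" "k \<le> n - 1" "1 \<le> i" "i \<le> d - 1" "a = i + k * (d - 1)"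
    | (stopper) "a = n * (d - 1) + 1"
proof -
  consider "a \<le> d - 1" | "d - 1 < a" "a \<le> n * (d - 1)" | "a = n * (d - 1) + 1"
    using assms by force
  then show thesis
  proof cases
    case 2
    define k where "k = (a - 1) div (d - 1)"
    define i where "i = (a - 1) mod (d - 1) + 1"
    have pos: "d - 1 > 0" using assms by simp
    have "(d - 1) div (d - 1) \<le> (a - 1) div (d - 1)" using 2 by (intro div_le_mono) linarith
    then have "1 \<le> k" unfolding k_def using pos by simp
    moreover have "k < n"
      unfolding k_def using 2 pos by (simp add: div_less_iff_less_mult)
    moreover have "i \<le> d - 1" unfolding i_def using mod_less_divisor[OF pos, of "a - 1"] by linarith
    moreover have "a = i + k * (d - 1)"
      unfolding i_def k_def using 2 pos mod_div_mult_eq[of "a - 1" "d - 1"] by linarith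
    ultimately show thesis using middle[of k i] unfolding i_def by simp
  qed (use assms first stopper in auto)
qed

definition locally_orthogonal :: "nat \<Rightarrow> nat \<Rightarrow> nat \<Rightarrow> nat \<Rightarrow> bool" where
  "locally_orthogonal d n a b \<longleftrightarrow>
     (\<exists>l\<in>{1..n}. local_ip d (phi_loc d n a l) (phi_loc d n b l) = 0)"

lemma locally_orthogonal_commute: "locally_orthogonal d n a b \<Longrightarrow> locally_orthogonal d n b a"
  unfolding locally_orthogonal_def by (subst local_ip_commute) auto

lemma ip_phi_eq_0_if_locally_orthogonal:
  "locally_orthogonal d n a b \<Longrightarrow> ip d n (phi d n a) (phi d n b) = 0"
  unfolding locally_orthogonal_def phi_def ip_prod_state by simp

context
  fixes d n :: nat
  assumes d3: "d \<ge> 3" and n3: "n \<ge> 3"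
begin

lemma first_indices_lt_stopper: "d - 1 < n * (d - 1) + 1"
proof -
  have "1 * (d - 1) \<le> n * (d - 1)" using n3 by (intro mult_le_mono1) simp
  then show ?thesis by linarith
qed

lemma phi_loc_stopper: "phi_loc d n (n * (d - 1) + 1) = (\<lambda>l. ket_uniform d)"
proof -
  have "\<not> n * (d - 1) + 1 \<le> d - 1" "\<not> n * (d - 1) + 1 \<le> n * (d - 1)"
    using first_indices_lt_stopper by linarith+
  then show ?thesis unfolding phi_loc_def by (intro ext) (simp only: if_False)
qed

lemma locally_orthogonal_first_first:
  "1 \<le> i \<Longrightarrow> i \<le> d - 1 \<Longrightarrow> 1 \<le> j \<Longrightarrow> j \<le> d - 1 \<Longrightarrow> i \<noteq> j \<Longrightarrow>
    locally_orthogonal d n i j"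
  unfolding locally_orthogonal_def using n3
  by (intro bexI[of _ n]) (auto simp: phi_loc_first local_ip_ket_ket)

lemma locally_orthogonal_first_middle:
  assumes "1 \<le> i" "i \<le> d - 1" "1 \<le> j" "j \<le> d - 1" "1 \<le> k" "k \<le> n - 1"
  shows "locally_orthogonal d n i (j + k * (d - 1))"
  unfolding locally_orthogonal_def phi_loc_middle[OF assms(5,6,3,4)] phi_loc_first[OF assms(1,2)]
  using assms n3
  by (intro bexI[of _ "if k = n - 1 then n - 1 else n"]) (auto simp: local_ip_ket_ket)

lemma locally_orthogonal_first_stopper:
  "1 \<le> i \<Longrightarrow> i \<le> d - 1 \<Longrightarrow> locally_orthogonal d n i (n * (d - 1) + 1)"
  unfolding locally_orthogonal_def phi_loc_stopper using n3 d3
  by (intro bexI[of _ 1]) (auto simp: phi_loc_first local_ip_ket_minus_ket_uniform)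

lemma locally_orthogonal_middle_stopper:
  assumes "1 \<le> i" "i \<le> d - 1" "1 \<le> k" "k \<le> n - 1"
  shows "locally_orthogonal d n (i + k * (d - 1)) (n * (d - 1) + 1)"
  unfolding locally_orthogonal_def phi_loc_stopper phi_loc_middle[OF assms(3,4,1,2)]
  using assms n3 d3
  by (intro bexI[of _ "k + 1"]) (auto simp: local_ip_ket_minus_ket_uniform)

lemma locally_orthogonal_middle_middle:
  assumes "1 \<le> i" "i \<le> d - 1" "1 \<le> k" "k \<le> n - 1"
    and "1 \<le> j" "j \<le> d - 1" "1 \<le> k'" "k' \<le> n - 1"
    and "k \<le> k'" "i + k * (d - 1) \<noteq> j + k' * (d - 1)"
  shows "locally_orthogonal d n (i + k * (d - 1)) (j + k' * (d - 1))"
  unfolding locally_orthogonal_def phi_loc_middle[OF assms(3,4,1,2)] phi_loc_middle[OF assms(7,8,5,6)]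
  using assms by (intro bexI[of _ k]) (auto simp: local_ip_ket_ket)

lemma locally_orthogonal_first:
  assumes "1 \<le> i" "i \<le> d - 1" and b: "b \<in> {1..n * (d - 1) + 1}" and "i \<noteq> b"
  shows "locally_orthogonal d n i b"
proof -
  have d2: "d \<ge> 2" using d3 by simp
  from d2 b show ?thesis
  proof (cases rule: phi_index_cases)
    case first
    then show ?thesis using assms by (intro locally_orthogonal_first_first)
  next
    case (middle k j)
    then show ?thesis using assms by (simp only:) (intro locally_orthogonal_first_middle)
  next
    case stopper
    then show ?thesis using assms by (simp only:) (intro locally_orthogonal_first_stopper)
  qed
qed

lemma locally_orthogonal_middle:
  assumes "1 \<le> k" "k \<le> n - 1" "1 \<le> i" "i \<le> d - 1"
    and b: "b \<in> {1..n * (d - 1) + 1}" "d - 1 < b" and "i + k * (d - 1) \<noteq> b"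
  shows "locally_orthogonal d n (i + k * (d - 1)) b"
proof -
  have d2: "d \<ge> 2" using d3 by simp
  from d2 b(1) show ?thesis
  proof (cases rule: phi_index_cases)
    case first
    then show ?thesis using b(2) by simp
  next
    case (middle k' j)
    show ?thesis
    proof (cases "k \<le> k'")
      case True
      then show ?thesis using assms middle by (simp only:) (intro locally_orthogonal_middle_middle)
    next
      case False
      then show ?thesis using assms middle
        by (simp only:) (rule locally_orthogonal_commute, intro locally_orthogonal_middle_middle, auto)
    qed
  next
    case stopper
    then show ?thesis using assms by (simp only:) (intro locally_orthogonal_middle_stopper)
  qed
qed

lemma locally_orthogonal_phi:
  assumes a: "a \<in> {1..n * (d - 1) + 1}" and b: "b \<in> {1..n * (d - 1) + 1}" and "a \<noteq> b"
  shows "locally_orthogonal d n a b"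
proof -
  have d2: "d \<ge> 2" using d3 by simp
  from d2 a show ?thesis
  proof (cases rule: phi_index_cases)
    case first
    then show ?thesis using assms by (intro locally_orthogonal_first)
  next
    case (middle k i)
    show ?thesis
    proof (cases "b \<le> d - 1")
      case True
      then show ?thesis using assms middle
        by (simp only:) (rule locally_orthogonal_commute, intro locally_orthogonal_first, auto)
    next
      case False
      then show ?thesis using assms middle by (simp only:) (intro locally_orthogonal_middle, auto)
    qed
  next
    case a_stopper: stopper
    then have "d - 1 < a" using first_indices_lt_stopper by simp
    from d2 b show ?thesis
    proof (cases rule: phi_index_cases)
      case first
      then show ?thesis using assms
        by (rule_tac locally_orthogonal_commute, intro locally_orthogonal_first, auto)
    next
      case (middle k j)
      then show ?thesis using assms \<open>d - 1 < a\<close>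
        by (simp only:) (rule locally_orthogonal_commute, intro locally_orthogonal_middle, auto)
    next
      case stopper
      then show ?thesis using a_stopper \<open>a \<noteq> b\<close> by simp
    qed
  qed
qed

lemma first_index_mem: "1 \<le> i \<Longrightarrow> i \<le> d - 1 \<Longrightarrow> i \<in> {1..n * (d - 1) + 1}"
  using first_indices_lt_stopper by simp

lemma middle_index_mem:
  assumes "1 \<le> i" "i \<le> d - 1" "1 \<le> k" "k \<le> n - 1"
  shows "i + k * (d - 1) \<in> {1..n * (d - 1) + 1}"
proof -
  have "(k + 1) * (d - 1) \<le> n * (d - 1)" using assms n3 by (intro mult_le_mono1) simp
  then show ?thesis using assms by simp
qed

lemma orth_preserving_local_ip:
  assumes "orth_preserving d n t E" "t \<in> {1..n}"
    and "a \<in> {1..n * (d - 1) + 1}" "b \<in> {1..n * (d - 1) + 1}" "a \<noteq> b"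
    and "\<forall>l\<in>{1..n} - {t}. local_ip d (phi_loc d n a l) (phi_loc d n b l) \<noteq> 0"
  shows "local_ip d (phi_loc d n a t) (mat_vec d E (phi_loc d n b t)) = 0"
proof -
  have "ip d n (phi d n a) (loc_op d t E (phi d n b)) = 0"
    using assms(1,3-5) unfolding orth_preserving_def by blast
  moreover have "(\<Prod>l\<in>{1..n} - {t}. local_ip d (phi_loc d n a l) (phi_loc d n b l)) \<noteq> 0"
    using assms(6) by simp
  ultimately show ?thesis unfolding phi_def ip_prod_state_loc_op[OF assms(2)] by simp
qed

lemma orth_preserving_entry_eq_0:
  assumes "orth_preserving d n t E" "t \<in> {1..n}"
    and "a \<in> {1..n * (d - 1) + 1}" "b \<in> {1..n * (d - 1) + 1}" "a \<noteq> b"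
    and "\<forall>l\<in>{1..n} - {t}. local_ip d (phi_loc d n a l) (phi_loc d n b l) \<noteq> 0"
    and "phi_loc d n a t = ket i" "phi_loc d n b t = ket j" "i < d" "j < d"
  shows "E i j = 0"
  using orth_preserving_local_ip[OF assms(1-6)] assms(7-10) by (simp add: mat_vec_ket local_ip_ket_left)

lemma orth_preserving_offdiag_eq_0:
  assumes op: "orth_preserving d n t E" and t: "t \<in> {1..n}"
    and ij: "1 \<le> i" "i \<le> d - 1" "1 \<le> j" "j \<le> d - 1" "i \<noteq> j"
  shows "E i j = 0"
proof (cases "t = n")
  case True
  note phi_i = phi_loc_first[OF ij(1,2)] and phi_j = phi_loc_first[OF ij(3,4)]
  show ?thesis
  proof (rule orth_preserving_entry_eq_0[OF op t first_index_mem first_index_mem])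
    show "\<forall>l\<in>{1..n} - {t}. local_ip d (phi_loc d n i l) (phi_loc d n j l) \<noteq> 0"
      unfolding phi_i phi_j using ij True n3
      by (auto simp: local_ip_ket_ket local_ip_ket_minus_ket_minus)
  qed (use ij True n3 in \<open>simp_all add: phi_i phi_j\<close>)
next
  case False
  then have k: "1 \<le> t" "t \<le> n - 1" using t by auto
  note phi_i = phi_loc_middle[OF k ij(1,2)] and phi_j = phi_loc_middle[OF k ij(3,4)]
  show ?thesis
  proof (rule orth_preserving_entry_eq_0[OF op t middle_index_mem middle_index_mem])
    show "\<forall>l\<in>{1..n} - {t}. local_ip d (phi_loc d n (i + t * (d - 1)) l)
        (phi_loc d n (j + t * (d - 1)) l) \<noteq> 0"
      unfolding phi_i phi_j using ij by (auto simp: local_ip_ket_ket local_ip_ket_minus_ket_minus)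
  qed (use ij k in \<open>unfold phi_i phi_j, simp_all\<close>)
qed

lemma orth_preserving_col0_eq_0:
  assumes op: "orth_preserving d n t E" and t: "t \<in> {1..n}" and j: "1 \<le> j" "j \<le> d - 1"
  shows "E j 0 = 0"
proof -
  consider "t \<le> n - 2" | "t = n - 1" | "t = n" using t by fastforce
  then show ?thesis
  proof cases
    case 1
    then have k: "1 \<le> t" "t \<le> n - 1" "1 \<le> t + 1" "t + 1 \<le> n - 1" using t n3 by auto
    note phi_a = phi_loc_middle[OF k(1,2) j] and phi_b = phi_loc_middle[OF k(3,4) j]
    show ?thesis
    proof (rule orth_preserving_entry_eq_0[OF op t middle_index_mem middle_index_mem])
      show "\<forall>l\<in>{1..n} - {t}. local_ip d (phi_loc d n (j + t * (d - 1)) l)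
          (phi_loc d n (j + (t + 1) * (d - 1)) l) \<noteq> 0"
        unfolding phi_a phi_b using j
        by (auto simp: local_ip_ket_ket local_ip_ket_ket_minus local_ip_ket_minus_ket)
    qed (use j k in \<open>unfold phi_a phi_b, simp_all\<close>)
  next
    case 2
    then have k: "1 \<le> t" "t \<le> n - 1" "t \<noteq> 1" "t \<noteq> n" using t n3 by auto
    note phi_a = phi_loc_middle[OF k(1,2) j] and phi_b = phi_loc_first[OF j]
    show ?thesis
    proof (rule orth_preserving_entry_eq_0[OF op t middle_index_mem first_index_mem])
      have "1 * (d - 1) \<le> t * (d - 1)" using k by (intro mult_le_mono1) simp
      then show "j + t * (d - 1) \<noteq> j" using j by linarith
      show "\<forall>l\<in>{1..n} - {t}. local_ip d (phi_loc d n (j + t * (d - 1)) l) (phi_loc d n j l) \<noteq> 0"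
        unfolding phi_a phi_b using j 2 n3
        by (auto simp: local_ip_ket_ket local_ip_ket_ket_minus local_ip_ket_minus_ket)
    qed (use j k in \<open>unfold phi_a phi_b, simp_all\<close>)
  next
    case 3
    have k: "1 \<le> (1::nat)" "1 \<le> n - 1" using n3 by auto
    note phi_a = phi_loc_first[OF j] and phi_b = phi_loc_middle[OF k j]
    show ?thesis
    proof (rule orth_preserving_entry_eq_0[OF op t first_index_mem middle_index_mem])
      show "\<forall>l\<in>{1..n} - {t}. local_ip d (phi_loc d n j l) (phi_loc d n (j + 1 * (d - 1)) l) \<noteq> 0"
        unfolding phi_a phi_b using j 3 n3
        by (auto simp: local_ip_ket_ket local_ip_ket_ket_minus local_ip_ket_minus_ket)
    qed (use j k 3 n3 in \<open>unfold phi_a phi_b, simp_all\<close>)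
  qed
qed

lemma orth_preserving_col_sum:
  assumes op: "orth_preserving d n t E" and t: "t \<in> {1..n}" and j: "1 \<le> j" "j \<le> d - 1"
  shows "(\<Sum>p<d. E p j) = (\<Sum>p<d. E p 0)"
proof -
  obtain b where b: "b \<in> {1..n * (d - 1) + 1}" "b \<noteq> n * (d - 1) + 1"
    and at_t: "phi_loc d n b t = ket_minus j"
    and elsewhere: "\<forall>l\<in>{1..n} - {t}. phi_loc d n b l \<in> {ket 0, ket j}"
  proof (cases "t = 1")
    case True
    show thesis
    proof (rule that[OF first_index_mem[OF j]])
      show "j \<noteq> n * (d - 1) + 1" using j first_indices_lt_stopper by simp
    qed (use True j in \<open>auto simp: phi_loc_first[OF j]\<close>)
  next
    case False
    then have k: "1 \<le> t - 1" "t - 1 \<le> n - 1" and tt: "t - 1 + 1 = t" using t by auto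
    show thesis
    proof (rule that[OF middle_index_mem[OF j k]])
      have "j + (t - 1) * (d - 1) \<le> (t - 1 + 1) * (d - 1)" using j by simp
      also have "\<dots> \<le> n * (d - 1)" using k by (intro mult_le_mono1) simp
      finally show "j + (t - 1) * (d - 1) \<noteq> n * (d - 1) + 1" by linarith
    qed (use False k in \<open>unfold phi_loc_middle[OF k j] tt, auto\<close>)
  qed
  have "local_ip d (phi_loc d n (n * (d - 1) + 1) t) (mat_vec d E (phi_loc d n b t)) = 0"
  proof (rule orth_preserving_local_ip[OF op t _ b(1)])
    show "\<forall>l\<in>{1..n} - {t}. local_ip d (phi_loc d n (n * (d - 1) + 1) l) (phi_loc d n b l) \<noteq> 0"
      unfolding phi_loc_stopper
    proof
      fix l assume "l \<in> {1..n} - {t}"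
      then have "phi_loc d n b l \<in> {ket 0, ket j}" using elsewhere by blast
      then show "local_ip d (ket_uniform d) (phi_loc d n b l) \<noteq> 0"
        using j d3 by (auto simp: local_ip_ket_uniform_ket)
    qed
  qed (use b(2) in auto)
  then have "(\<Sum>p<d. (E p 0 - E p j) / complex_of_real (sqrt 2)) = 0"
    unfolding phi_loc_stopper at_t using j d3 by (simp add: mat_vec_ket_minus local_ip_ket_uniform_left)
  then show ?thesis by (simp add: sum_divide_distrib[symmetric] sum_subtractf)
qed

lemma orth_preserving_psd_offdiag_eq_0:
  assumes "psd d E" "orth_preserving d n t E" "t \<in> {1..n}" and ij: "i < d" "j < d" "i \<noteq> j"
  shows "E i j = 0"
proof -
  have col0: "E k 0 = 0" if "0 < k" "k < d" for k
    using orth_preserving_col0_eq_0[OF assms(2,3)] that by simp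
  consider "i = 0" | "j = 0" | "0 < i" "0 < j" using ij by auto
  then show ?thesis
  proof cases
    case 1
    then show ?thesis using psd_hermitian[OF assms(1) ij(2,1)] col0[of j] ij by simp
  next
    case 2
    then show ?thesis using col0[of i] ij by simp
  qed (use orth_preserving_offdiag_eq_0[OF assms(2,3)] ij in simp)
qed

end

theorem theorem1:
  fixes d n :: nat
  assumes "d \<ge> 3" and "n \<ge> 3"
  shows "(\<forall>a\<in>{1..n*(d-1)+1}. \<forall>b\<in>{1..n*(d-1)+1}. a \<noteq> b \<longrightarrow>
            ip d n (phi d n a) (phi d n b) = 0)
       \<and> (\<forall>t\<in>{1..n}. \<forall>E. psd d E \<and> orth_preserving d n t E \<longrightarrow> prop_identity d E)"
proof (intro conjI ballI allI impI)
  fix a b assume "a \<in> {1..n*(d-1)+1}" "b \<in> {1..n*(d-1)+1}" "a \<noteq> b"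
  then show "ip d n (phi d n a) (phi d n b) = 0"
    by (intro ip_phi_eq_0_if_locally_orthogonal locally_orthogonal_phi[OF assms])
next
  fix t E assume t: "t \<in> {1..n}" and "psd d E \<and> orth_preserving d n t E"
  then have psd: "psd d E" and op: "orth_preserving d n t E" by auto
  show "prop_identity d E"
  proof (rule prop_identity_if_diagonal_col_sums_eq)
    show "E i j = 0" if "i < d" "j < d" "i \<noteq> j" for i j
      using orth_preserving_psd_offdiag_eq_0[OF assms psd op t that] .
    show "(\<Sum>p<d. E p j) = (\<Sum>p<d. E p 0)" if "j < d" for j
      using orth_preserving_col_sum[OF assms op t, of j] that by (cases "j = 0") auto
  qed
qed

end
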